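(* Let $\pi^{(d)}$ be $\tau^{(d)}$ (with $d\ge6$) or $\sigma^{(d)}$ (with $d\ge8$). If $\beta\le d$ and $\beta\equiv 2\pmod 4$, then $v=\sum_{\alpha=1}^{\beta}(-1)^\alpha e_\alpha\in\{e_\alpha\}_{\alpha\in\mathcal{A}}^{\Omega^{(d)}}$.
   Context: Alphabet $\mathcal{A}=\{1,\dots,d\}$; $\tau^{(d)}$ has top row $1,2,\dots,d$ and bottom row $d,d-1,\dots,6,3,2,5,4,1$; $\sigma^{(d)}$ has top row $1,\dots,d$ and bottom row $d,d-1,\dots,8,3,2,7,6,5,4,1$ (rows list letters in order of $\pi_{\mathrm t}$, $\pi_{\mathrm b}$). $\Omega^{(d)}=\Omega_{\pi^{(d)}}$ where $(\Omega_\pi)_{\alpha\beta}=+1$ if $\pi_{\mathrm t}(\alpha)<\pi_{\mathrm t}(\beta)$ and $\pi_{\mathrm b}(\alpha)>\pi_{\mathrm b}(\beta)$, $-1$ if the reverse inequalities hold, $0$ otherwise; $\langle u,v\rangle=u\Omega^{(d)}v^{\intercal}$ on $\mathbb{Z}^{\mathcal{A}}$, with canonical basis $e_\alpha$. A set $X\subseteq\mathbb{Z}^{\mathcal{A}}$ is $\Omega^{(d)}$-closed if $X=-X$ and for all $v,w\in X$ with $\langle v,w\rangle=1$ one has $v+w,v-w\in X$; $Y^{\Omega^{(d)}}$ denotes the smallest $\Omega^{(d)}$-closed set containing $Y$. *)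

theory Defs
  imports Main
begin

text \<open>Alphabet A = {1..d}. A permutation is given by its two rows (lists of letters in
  the order of pi_t and pi_b). pi_t(a), pi_b(a) are positions of a in the rows.\<close>

type_synonym perm_rows = "nat list \<times> nat list"

definition pos :: "nat list \<Rightarrow> nat \<Rightarrow> nat" where
  "pos xs a = Suc (LEAST i. i < length xs \<and> xs ! i = a)"

definition tau_perm :: "nat \<Rightarrow> perm_rows" where
  "tau_perm d = ([1..<d+1], rev [6..<d+1] @ [3,2,5,4,1])"

definition sigma_perm :: "nat \<Rightarrow> perm_rows" where
  "sigma_perm d = ([1..<d+1], rev [8..<d+1] @ [3,2,7,6,5,4,1])"

definition Omega :: "perm_rows \<Rightarrow> nat \<Rightarrow> nat \<Rightarrow> int" where
  "Omega p a b =
     (if pos (fst p) a < pos (fst p) b \<and> pos (snd p) a > pos (snd p) b then 1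
      else if pos (fst p) a > pos (fst p) b \<and> pos (snd p) a < pos (snd p) b then -1
      else 0)"

definition ZA :: "nat \<Rightarrow> (nat \<Rightarrow> int) set" where
  "ZA d = {v. \<forall>i. i \<notin> {1..d} \<longrightarrow> v i = 0}"

definition evec :: "nat \<Rightarrow> nat \<Rightarrow> int" where
  "evec a = (\<lambda>i. if i = a then 1 else 0)"

definition form :: "nat \<Rightarrow> perm_rows \<Rightarrow> (nat \<Rightarrow> int) \<Rightarrow> (nat \<Rightarrow> int) \<Rightarrow> int" where
  "form d p u v = (\<Sum>a\<in>{1..d}. \<Sum>b\<in>{1..d}. u a * Omega p a b * v b)"

definition omega_closed :: "nat \<Rightarrow> perm_rows \<Rightarrow> (nat \<Rightarrow> int) set \<Rightarrow> bool" where
  "omega_closed d p X \<longleftrightarrow> X \<subseteq> ZA d \<and> (\<lambda>v i. - v i) ` X = X \<and>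
     (\<forall>v\<in>X. \<forall>w\<in>X. form d p v w = 1 \<longrightarrow> (\<lambda>i. v i + w i) \<in> X \<and> (\<lambda>i. v i - w i) \<in> X)"

definition omega_closure :: "nat \<Rightarrow> perm_rows \<Rightarrow> (nat \<Rightarrow> int) set \<Rightarrow> (nat \<Rightarrow> int) set" where
  "omega_closure d p Y = \<Inter>{X. Y \<subseteq> X \<and> omega_closed d p X}"

end

theory Submission
  imports Defs "HOL-Library.Function_Algebras"
begin

text \<open>
  Membership in the closure is certified one move at a time: if v and w lie in an
  Omega-closed set and <v, w> = +-1, then so do v + w and v - w. Both tau and sigma put the
  letters above a small block (1..5, resp. 1..7) first and in decreasing order in the bottom
  row, so Omega a b = 1 whenever a < b and b lies above the block. Hence the alternating vector
  v_beta is orthogonal to every e_c with c > beta, while for even beta beyond the block it pairs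
  to -1 with e_2, e_3 and e_5. The six moves by e_3, e_2 + e_(beta+1), e_5 + e_(beta+2),
  e_2 + e_(beta+4), e_3 + e_(beta+3) and e_5 then turn v_beta into v_(beta+4). The induction
  starts from v_2 = e_2 - e_1 and short explicit chains reaching v_6, and v_10 for sigma, whose
  block is longer.
\<close>

lemma Omega_antisym: "Omega p a b = - Omega p b a"
  unfolding Omega_def by auto

lemma Omega_self [simp]: "Omega p a a = 0"
  unfolding Omega_def by auto

lemma form_add_left: "form d p (u + w) z = form d p u z + form d p w z"
  unfolding form_def by (simp add: algebra_simps sum.distrib)

lemma form_diff_left: "form d p (u - w) z = form d p u z - form d p w z"
  unfolding form_def by (simp add: algebra_simps sum_subtractf)

lemma form_uminus_left: "form d p (- u) z = - form d p u z"
  unfolding form_def by (simp add: sum_negf)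

lemma form_add_right: "form d p z (u + w) = form d p z u + form d p z w"
  unfolding form_def by (simp add: algebra_simps sum.distrib)

lemma form_diff_right: "form d p z (u - w) = form d p z u - form d p z w"
  unfolding form_def by (simp add: algebra_simps sum_subtractf)

lemma form_uminus_right: "form d p z (- u) = - form d p z u"
  unfolding form_def by (simp add: sum_negf)

lemmas form_bilinear = form_add_left form_diff_left form_uminus_left
  form_add_right form_diff_right form_uminus_right

lemma form_antisym: "form d p u w = - form d p w u"
proof -
  have "u a * Omega p a b * w b = - (w b * Omega p b a * u a)" for a b
    by (simp add: Omega_antisym[of p a b])
  then have "form d p u w = (\<Sum>a\<in>{1..d}. \<Sum>b\<in>{1..d}. - (w b * Omega p b a * u a))"
    unfolding form_def by simp
  also have "\<dots> = - form d p w u"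
    unfolding form_def by (subst sum.swap) (simp add: sum_negf)
  finally show ?thesis .
qed

lemma form_evec_right: "c \<in> {1..d} \<Longrightarrow> form d p u (evec c) = (\<Sum>a\<in>{1..d}. u a * Omega p a c)"
  unfolding form_def evec_def by (simp add: if_distrib cong: if_cong)

lemma form_evec_evec: "a \<in> {1..d} \<Longrightarrow> c \<in> {1..d} \<Longrightarrow> form d p (evec a) (evec c) = Omega p a c"
  by (subst form_evec_right) (auto simp: evec_def if_distrib[of "\<lambda>x. x * _"] cong: if_cong)

lemma omega_closed_add_mem:
  assumes X: "omega_closed d p X" "u \<in> X" "w \<in> X" and uw: "form d p u w \<in> {1, -1}"
  shows "u + w \<in> X"
proof (cases "form d p u w = 1")
  case True
  then show ?thesis using X unfolding omega_closed_def plus_fun_def by blast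
next
  case False
  then have "form d p w u = 1" using uw form_antisym[of d p w u] by auto
  then have "w + u \<in> X" using X unfolding omega_closed_def plus_fun_def by blast
  then show ?thesis by (simp add: add.commute)
qed

lemma omega_closed_diff_mem:
  assumes X: "omega_closed d p X" "u \<in> X" "w \<in> X" and uw: "form d p u w \<in> {1, -1}"
  shows "u - w \<in> X"
proof -
  have "- w \<in> X" using X unfolding omega_closed_def fun_Compl_def by blast
  moreover have "form d p u (- w) \<in> {1, -1}" using uw by (auto simp: form_uminus_right)
  ultimately have "u + - w \<in> X" by (rule omega_closed_add_mem[OF X(1,2)])
  then show ?thesis by simp
qed

lemma evec_add_diff_mem:
  assumes X: "omega_closed d p X" "\<And>a. a \<in> {1..d} \<Longrightarrow> evec a \<in> X"
    and ab: "a \<in> {1..d}" "b \<in> {1..d}" "Omega p a b \<in> {1, -1}"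
  shows "evec a + evec b \<in> X" and "evec a - evec b \<in> X"
proof -
  have "form d p (evec a) (evec b) \<in> {1, -1}" using ab by (simp add: form_evec_evec)
  then show "evec a + evec b \<in> X" "evec a - evec b \<in> X"
    using omega_closed_add_mem omega_closed_diff_mem X ab(1,2) by blast+
qed

definition alternating_vec :: "nat \<Rightarrow> nat \<Rightarrow> int" where
  "alternating_vec \<beta> = (\<lambda>i. \<Sum>a\<in>{1..\<beta>}. (-1) ^ a * evec a i)"

lemma alternating_vec_apply: "alternating_vec \<beta> i = (if i \<in> {1..\<beta>} then (-1) ^ i else 0)"
  unfolding alternating_vec_def evec_def by (simp add: if_distrib cong: if_cong)

lemma form_alternating_vec_evec:
  assumes "\<beta> \<le> d" "c \<in> {1..d}"
  shows "form d p (alternating_vec \<beta>) (evec c) = (\<Sum>a\<in>{1..\<beta>}. (-1) ^ a * Omega p a c)"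
proof -
  have "form d p (alternating_vec \<beta>) (evec c) = (\<Sum>a\<in>{1..d}. alternating_vec \<beta> a * Omega p a c)"
    using assms(2) by (rule form_evec_right)
  also have "\<dots> = (\<Sum>a\<in>{1..\<beta>}. alternating_vec \<beta> a * Omega p a c)"
    by (rule sum.mono_neutral_right) (use assms(1) in \<open>auto simp: alternating_vec_apply\<close>)
  also have "\<dots> = (\<Sum>a\<in>{1..\<beta>}. (-1) ^ a * Omega p a c)"
    by (rule sum.cong) (auto simp: alternating_vec_apply)
  finally show ?thesis .
qed

lemma sum_alternating_signs: "(\<Sum>a\<in>{1..n}. (-1::int) ^ a) = (if even n then 0 else -1)"
  by (induction n) simp_all

lemma alternating_vec_2_mem:
  assumes X: "omega_closed d p X" "\<And>a. a \<in> {1..d} \<Longrightarrow> evec a \<in> X"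
    and "2 \<le> d" "Omega p 2 1 \<in> {1, -1}"
  shows "alternating_vec 2 \<in> X"
proof -
  have "evec 2 - evec 1 \<in> X"
    using evec_add_diff_mem(2)[OF X] assms(3,4) by simp
  also have "evec 2 - evec 1 = alternating_vec 2"
    by (auto simp: fun_eq_iff alternating_vec_apply evec_def)
  finally show ?thesis .
qed

lemma alternating_vec_add4_mem:
  assumes X: "omega_closed d p X" and e: "\<And>a. a \<in> {1..d} \<Longrightarrow> evec a \<in> X"
    and alt: "alternating_vec \<beta> \<in> X" and \<beta>: "even \<beta>" "5 \<le> \<beta>" "\<beta> + 4 \<le> d"
    and up: "\<And>a b. a \<in> {1..d} \<Longrightarrow> b \<in> {1..d} \<Longrightarrow> a < b \<Longrightarrow> \<beta> < b \<Longrightarrow> Omega p a b = 1"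
    and small: "Omega p 2 3 = 1" "Omega p 2 5 = 0" "Omega p 3 5 = 0"
    and pairing: "\<And>c. c \<in> {2,3,5} \<Longrightarrow> form d p (alternating_vec \<beta>) (evec c) = -1"
  shows "alternating_vec (\<beta> + 4) \<in> X"
proof -
  have down: "Omega p b a = -1" if "a \<in> {1..d}" "b \<in> {1..d}" "a < b" "\<beta> < b" for a b
    using up[OF that] Omega_antisym[of p b a] by simp
  have small_swapped: "Omega p 3 2 = -1" "Omega p 5 2 = 0" "Omega p 5 3 = 0"
    using small Omega_antisym[of p 3 2] Omega_antisym[of p 5 2] Omega_antisym[of p 5 3] by simp_all
  have above: "form d p (alternating_vec \<beta>) (evec c) = 0" if "\<beta> < c" "c \<le> d" for c
  proof -
    have "form d p (alternating_vec \<beta>) (evec c) = (\<Sum>a\<in>{1..\<beta>}. (-1) ^ a)"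
      using that \<beta> by (simp add: form_alternating_vec_evec up)
    then show ?thesis using \<beta>(1) sum_alternating_signs[of \<beta>] by simp
  qed
  note form_simps = form_bilinear form_evec_evec up down small small_swapped pairing above
  let ?v = "alternating_vec \<beta>"
  have e2_plus_eb1: "evec 2 + evec (\<beta> + 1) \<in> X"
    by (rule evec_add_diff_mem(1)[OF X e]) (use \<beta> in \<open>simp_all add: up\<close>)
  have e5_plus_eb2: "evec 5 + evec (\<beta> + 2) \<in> X"
    by (rule evec_add_diff_mem(1)[OF X e]) (use \<beta> in \<open>simp_all add: up\<close>)
  have e2_plus_eb4: "evec 2 + evec (\<beta> + 4) \<in> X"
    by (rule evec_add_diff_mem(1)[OF X e]) (use \<beta> in \<open>simp_all add: up\<close>)
  have e3_plus_eb3: "evec 3 + evec (\<beta> + 3) \<in> X"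
    by (rule evec_add_diff_mem(1)[OF X e]) (use \<beta> in \<open>simp_all add: up\<close>)
  have "?v + evec 3 \<in> X"
    by (rule omega_closed_add_mem[OF X alt e]) (use \<beta> in \<open>simp_all add: form_simps\<close>)
  then have "?v + evec 3 - (evec 2 + evec (\<beta> + 1)) \<in> X"
    by (rule omega_closed_diff_mem[OF X _ e2_plus_eb1]) (use \<beta> in \<open>simp add: form_simps\<close>)
  then have "?v + evec 3 - (evec 2 + evec (\<beta> + 1)) + (evec 5 + evec (\<beta> + 2)) \<in> X"
    by (rule omega_closed_add_mem[OF X _ e5_plus_eb2]) (use \<beta> in \<open>simp add: form_simps\<close>)
  then have "?v + evec 3 - (evec 2 + evec (\<beta> + 1)) + (evec 5 + evec (\<beta> + 2))
      + (evec 2 + evec (\<beta> + 4)) \<in> X"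
    by (rule omega_closed_add_mem[OF X _ e2_plus_eb4]) (use \<beta> in \<open>simp add: form_simps\<close>)
  then have "?v + evec 3 - (evec 2 + evec (\<beta> + 1)) + (evec 5 + evec (\<beta> + 2)) + (evec 2 + evec (\<beta> + 4))
      - (evec 3 + evec (\<beta> + 3)) \<in> X"
    by (rule omega_closed_diff_mem[OF X _ e3_plus_eb3]) (use \<beta> in \<open>simp add: form_simps\<close>)
  then have "?v + evec 3 - (evec 2 + evec (\<beta> + 1)) + (evec 5 + evec (\<beta> + 2)) + (evec 2 + evec (\<beta> + 4))
      - (evec 3 + evec (\<beta> + 3)) - evec 5 \<in> X"
    by (rule omega_closed_diff_mem[OF X _ e]) (use \<beta> in \<open>simp_all add: form_simps\<close>)
  also have "?v + evec 3 - (evec 2 + evec (\<beta> + 1)) + (evec 5 + evec (\<beta> + 2)) + (evec 2 + evec (\<beta> + 4))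
      - (evec 3 + evec (\<beta> + 3)) - evec 5 = alternating_vec (\<beta> + 4)"
    using \<beta> by (auto simp: fun_eq_iff alternating_vec_apply evec_def)
  finally show ?thesis .
qed

lemma pos_Cons_self [simp]: "pos (a # xs) a = 1"
  unfolding pos_def by simp

lemma pos_Cons_other [simp]:
  assumes "x \<noteq> a" "a \<in> set xs"
  shows "pos (x # xs) a = Suc (pos xs a)"
proof -
  obtain i where "i < length xs" "xs ! i = a" using assms(2) by (auto simp: in_set_conv_nth)
  then show ?thesis
    unfolding pos_def using assms(1) by (subst Least_Suc2[where n = "Suc i" and m = i]) auto
qed

lemma pos_append_left: "a \<in> set xs \<Longrightarrow> pos (xs @ ys) a = pos xs a"
proof (induction xs)
  case (Cons x xs) then show ?case by (cases "x = a") auto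
qed simp

lemma pos_append_right: "a \<notin> set xs \<Longrightarrow> a \<in> set ys \<Longrightarrow> pos (xs @ ys) a = length xs + pos ys a"
  by (induction xs) auto

lemma pos_upt: "m \<le> a \<Longrightarrow> a < n \<Longrightarrow> pos [m..<n] a = Suc (a - m)"
proof (induction n)
  case (Suc n) then show ?case by (cases "a = n") (auto simp: pos_append_left pos_append_right)
qed simp

lemma pos_rev_upt: "m \<le> a \<Longrightarrow> a < n \<Longrightarrow> pos (rev [m..<n]) a = n - a"
proof (induction n)
  case (Suc n) then show ?case by (cases "a = n") auto
qed simp

lemma pos_le_length: "a \<in> set xs \<Longrightarrow> pos xs a \<le> length xs"
  unfolding pos_def by (rule Suc_leI, rule LeastI2_ex) (auto simp: in_set_conv_nth)

definition tail_perm :: "nat \<Rightarrow> nat \<Rightarrow> nat list \<Rightarrow> perm_rows" where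
  "tail_perm d k s = ([1..<Suc d], rev [Suc k..<Suc d] @ s)"

lemma tau_perm_eq_tail_perm: "tau_perm d = tail_perm d 5 [3,2,5,4,1]"
  by (simp add: tau_perm_def tail_perm_def del: upt_Suc)

lemma sigma_perm_eq_tail_perm: "sigma_perm d = tail_perm d 7 [3,2,7,6,5,4,1]"
  by (simp add: sigma_perm_def tail_perm_def del: upt_Suc)

lemma Omega_tail_perm:
  assumes s: "distinct s" "set s = {1..k}" and "k \<le> d" and ab: "a \<in> {1..d}" "b \<in> {1..d}"
  shows "Omega (tail_perm d k s) a b =
    (if k < max a b then (if a < b then 1 else if b < a then -1 else 0)
     else if a < b \<and> pos s b < pos s a then 1 else if b < a \<and> pos s a < pos s b then -1 else 0)"
proof -
  have len: "length s = k" using s distinct_card by fastforce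
  have bot: "pos (rev [Suc k..<Suc d] @ s) x = (if k < x then Suc d - x else d - k + pos s x)"
    if "x \<in> {1..d}" for x
    using that s len by (auto simp: pos_append_left pos_append_right pos_rev_upt simp del: upt_Suc)
  have top: "pos [1..<Suc n] x = x" if "x \<in> {1..n}" for x n
    using that by (simp add: pos_upt del: upt_Suc)
  have small: "pos s x \<le> k" if "x \<in> {1..k}" for x using that s len pos_le_length by metis
  let ?B = "rev [Suc k..<Suc d] @ s"
  have cmp: "pos ?B x < pos ?B y \<longleftrightarrow> y < x" if "x \<in> {1..d}" "y \<in> {1..d}" "k < max x y" for x y
  proof -
    have "x \<le> k \<Longrightarrow> pos s x \<le> k" "y \<le> k \<Longrightarrow> pos s y \<le> k" using small that by auto
    moreover have "0 < pos s x" "0 < pos s y" by (simp_all add: pos_def)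
    then show ?thesis using that bot[OF that(1)] bot[OF that(2)] by auto
  qed
  have top_ab: "pos [1..<Suc d] a = a" "pos [1..<Suc d] b = b" using ab top by auto
  show ?thesis
  proof (cases "k < max a b")
    case True
    then show ?thesis using ab top_ab cmp[OF ab] cmp[OF ab(2,1)]
      unfolding Omega_def tail_perm_def fst_conv snd_conv by (auto simp del: upt_Suc)
  next
    case False
    then have "pos ?B a = d - k + pos s a" "pos ?B b = d - k + pos s b"
      using bot[OF ab(1)] bot[OF ab(2)] by auto
    then show ?thesis using False top_ab
      unfolding Omega_def tail_perm_def fst_conv snd_conv by (simp del: upt_Suc)
  qed
qed

lemma form_alternating_vec_tail_perm:
  assumes s: "distinct s" "set s = {1..k}" and k: "odd k" "k < \<beta>" "even \<beta>" "\<beta> \<le> d"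
    and c: "c \<in> {1..k}"
  shows "form d (tail_perm d k s) (alternating_vec \<beta>) (evec c)
    = (\<Sum>a\<in>{1..k}. (-1) ^ a * Omega (tail_perm d k s) a c) - 1"
proof -
  let ?p = "tail_perm d k s"
  have "{1..k} \<inter> {k<..\<beta>} = {}" "{1..\<beta>} = {1..k} \<union> {k<..\<beta>}" using k by auto
  note split = sum.union_disjoint[of "{1..k}" "{k<..\<beta>}", OF _ _ this(1), unfolded this(2)[symmetric]]
  have "(\<Sum>a\<in>{k<..\<beta>}. (-1) ^ a * Omega ?p a c) = - (\<Sum>a\<in>{k<..\<beta>}. (-1::int) ^ a)"
    by (subst sum_negf[symmetric], rule sum.cong) (use s k c in \<open>auto simp: Omega_tail_perm\<close>)
  also have "\<dots> = -1"
    using split[of "\<lambda>a. (-1::int) ^ a"] sum_alternating_signs[of k] sum_alternating_signs[of \<beta>] k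
    by simp
  finally have high: "(\<Sum>a\<in>{k<..\<beta>}. (-1) ^ a * Omega ?p a c) = -1" .
  have "form d ?p (alternating_vec \<beta>) (evec c) = (\<Sum>a\<in>{1..\<beta>}. (-1) ^ a * Omega ?p a c)"
    using k c by (simp add: form_alternating_vec_evec)
  also have "\<dots> = (\<Sum>a\<in>{1..k}. (-1) ^ a * Omega ?p a c) - 1"
    using split[of "\<lambda>a. (-1) ^ a * Omega ?p a c"] high by simp
  finally show ?thesis .
qed

lemma tail_perm_alternating_vec_mem:
  assumes s: "distinct s" "set s = {1..k}" "odd k" "5 \<le> k"
    and small: "Omega (tail_perm d k s) 2 3 = 1" "Omega (tail_perm d k s) 2 5 = 0"
      "Omega (tail_perm d k s) 3 5 = 0"
    and balanced: "\<And>c. c \<in> {2,3,5} \<Longrightarrow> (\<Sum>a\<in>{1..k}. (-1) ^ a * Omega (tail_perm d k s) a c) = 0"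
    and X: "omega_closed d (tail_perm d k s) X" "\<And>a. a \<in> {1..d} \<Longrightarrow> evec a \<in> X"
    and start: "alternating_vec \<beta> \<in> X" "k < \<beta>" "even \<beta>"
  shows "\<beta> + 4 * j \<le> d \<Longrightarrow> alternating_vec (\<beta> + 4 * j) \<in> X"
proof (induction j)
  case (Suc j)
  let ?\<beta> = "\<beta> + 4 * j"
  have "alternating_vec (?\<beta> + 4) \<in> X"
  proof (rule alternating_vec_add4_mem[OF X])
    show "alternating_vec ?\<beta> \<in> X" using Suc by simp
    show "even ?\<beta>" "5 \<le> ?\<beta>" "?\<beta> + 4 \<le> d" using start s Suc.prems by auto
    show "Omega (tail_perm d k s) a b = 1" if "a \<in> {1..d}" "b \<in> {1..d}" "a < b" "?\<beta> < b" for a b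
      using that s start by (simp add: Omega_tail_perm)
    show "Omega (tail_perm d k s) 2 3 = 1" "Omega (tail_perm d k s) 2 5 = 0"
      "Omega (tail_perm d k s) 3 5 = 0"
      by (fact small)+
    show "form d (tail_perm d k s) (alternating_vec ?\<beta>) (evec c) = -1" if "c \<in> {2,3,5}" for c
    proof -
      have "c \<in> {1..k}" "k < ?\<beta>" "even ?\<beta>" "?\<beta> \<le> d" using that s start Suc.prems by auto
      from form_alternating_vec_tail_perm[OF s(1-3) this(2-4) this(1)] show ?thesis
        using balanced[OF that] by simp
    qed
  qed
  then show ?case by (simp add: algebra_simps)
qed (use start in simp)

lemma atLeastAtMost_nat_numeral:
  "atLeastAtMost m (numeral k :: nat) =
     (if m \<le> numeral k then insert (numeral k) (atLeastAtMost m (pred_numeral k)) else {})"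
  by (simp add: numeral_eq_Suc atLeastAtMostSuc_conv)

lemma tau_block: "distinct [3,2,5,4,1::nat]" "set [3,2,5,4,1::nat] = {1..5}"
  by auto

lemma Omega_tau_perm:
  assumes "6 \<le> d" "a \<in> {1..d}" "b \<in> {1..d}"
  shows "Omega (tau_perm d) a b =
    (if 5 < max a b then (if a < b then 1 else if b < a then -1 else 0)
     else if a < b \<and> pos [3,2,5,4,1] b < pos [3,2,5,4,1] a then 1
     else if b < a \<and> pos [3,2,5,4,1] a < pos [3,2,5,4,1] b then -1 else 0)"
  using assms Omega_tail_perm[OF tau_block, of d a b] by (simp add: tau_perm_eq_tail_perm)

lemma tau_perm_alternating_vec_6_mem:
  assumes X: "omega_closed d (tau_perm d) X" and e: "\<And>a. a \<in> {1..d} \<Longrightarrow> evec a \<in> X"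
    and d: "6 \<le> d" and alt: "alternating_vec 2 \<in> X"
  shows "alternating_vec 6 \<in> X"
proof -
  note form_simps = form_bilinear form_evec_evec form_alternating_vec_evec Omega_tau_perm
    atLeastAtMost_nat_numeral
  have e6_minus_e3: "evec 6 - evec 3 \<in> X"
    by (rule evec_add_diff_mem(2)[OF X e]) (use d in \<open>simp_all add: Omega_tau_perm\<close>)
  have "alternating_vec 2 + evec 4 \<in> X"
    by (rule omega_closed_add_mem[OF X alt e]) (use d in \<open>simp_all add: form_simps\<close>)
  then have "alternating_vec 2 + evec 4 + (evec 6 - evec 3) \<in> X"
    by (rule omega_closed_add_mem[OF X _ e6_minus_e3]) (use d in \<open>simp_all add: form_simps\<close>)
  then have "alternating_vec 2 + evec 4 + (evec 6 - evec 3) - evec 5 \<in> X"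
    by (rule omega_closed_diff_mem[OF X _ e]) (use d in \<open>simp_all add: form_simps\<close>)
  also have "alternating_vec 2 + evec 4 + (evec 6 - evec 3) - evec 5 = alternating_vec 6"
    by (auto simp: fun_eq_iff alternating_vec_apply evec_def)
  finally show ?thesis .
qed

lemma tau_perm_alternating_vec_mem:
  assumes X: "omega_closed d (tau_perm d) X" "\<And>a. a \<in> {1..d} \<Longrightarrow> evec a \<in> X"
    and d: "6 \<le> d" and \<beta>: "\<beta> \<le> d" "\<beta> mod 4 = 2"
  shows "alternating_vec \<beta> \<in> X"
proof -
  have alt2: "alternating_vec 2 \<in> X"
    by (rule alternating_vec_2_mem[OF X]) (use d in \<open>simp_all add: Omega_tau_perm\<close>)
  have "\<exists>m. \<beta> = 4 * m + 2" using \<beta>(2) by presburger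
  then obtain m where m: "\<beta> = 4 * m + 2" ..
  show ?thesis
  proof (cases m)
    case 0
    then have "\<beta> = 2" using m by simp
    with alt2 show ?thesis by simp
  next
    case (Suc j)
    have "alternating_vec (6 + 4 * j) \<in> X"
    proof (rule tail_perm_alternating_vec_mem[OF tau_block, folded tau_perm_eq_tail_perm,
          OF _ _ _ _ _ _ X])
      show "alternating_vec 6 \<in> X" using tau_perm_alternating_vec_6_mem[OF X d alt2] .
      show "6 + 4 * j \<le> d" using m Suc \<beta>(1) by simp
      show "(\<Sum>a\<in>{1..5}. (-1) ^ a * Omega (tau_perm d) a c) = 0" if "c \<in> {2,3,5}" for c
        using d that by (auto simp: Omega_tau_perm atLeastAtMost_nat_numeral)
    qed (use d in \<open>simp_all add: Omega_tau_perm\<close>)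
    then show ?thesis using m Suc by simp
  qed
qed

lemma sigma_block: "distinct [3,2,7,6,5,4,1::nat]" "set [3,2,7,6,5,4,1::nat] = {1..7}"
  by auto

lemma Omega_sigma_perm:
  assumes "8 \<le> d" "a \<in> {1..d}" "b \<in> {1..d}"
  shows "Omega (sigma_perm d) a b =
    (if 7 < max a b then (if a < b then 1 else if b < a then -1 else 0)
     else if a < b \<and> pos [3,2,7,6,5,4,1] b < pos [3,2,7,6,5,4,1] a then 1
     else if b < a \<and> pos [3,2,7,6,5,4,1] a < pos [3,2,7,6,5,4,1] b then -1 else 0)"
  using assms Omega_tail_perm[OF sigma_block, of d a b] by (simp add: sigma_perm_eq_tail_perm)

lemma sigma_perm_alternating_vec_6_mem:
  assumes X: "omega_closed d (sigma_perm d) X" and e: "\<And>a. a \<in> {1..d} \<Longrightarrow> evec a \<in> X"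
    and d: "8 \<le> d" and alt: "alternating_vec 2 \<in> X"
  shows "alternating_vec 6 \<in> X"
proof -
  note form_simps = form_bilinear form_evec_evec form_alternating_vec_evec Omega_sigma_perm
    atLeastAtMost_nat_numeral
  have e6_plus_e8: "evec 6 + evec 8 \<in> X"
    by (rule evec_add_diff_mem(1)[OF X e]) (use d in \<open>simp_all add: Omega_sigma_perm\<close>)
  have e5_plus_e8: "evec 5 + evec 8 \<in> X"
    by (rule evec_add_diff_mem(1)[OF X e]) (use d in \<open>simp_all add: Omega_sigma_perm\<close>)
  have "alternating_vec 2 + evec 4 \<in> X"
    by (rule omega_closed_add_mem[OF X alt e]) (use d in \<open>simp_all add: form_simps\<close>)
  then have "alternating_vec 2 + evec 4 + (evec 6 + evec 8) \<in> X"
    by (rule omega_closed_add_mem[OF X _ e6_plus_e8]) (use d in \<open>simp_all add: form_simps\<close>)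
  then have "alternating_vec 2 + evec 4 + (evec 6 + evec 8) - evec 3 \<in> X"
    by (rule omega_closed_diff_mem[OF X _ e]) (use d in \<open>simp_all add: form_simps\<close>)
  then have "alternating_vec 2 + evec 4 + (evec 6 + evec 8) - evec 3 - (evec 5 + evec 8) \<in> X"
    by (rule omega_closed_diff_mem[OF X _ e5_plus_e8]) (use d in \<open>simp_all add: form_simps\<close>)
  also have "alternating_vec 2 + evec 4 + (evec 6 + evec 8) - evec 3 - (evec 5 + evec 8)
      = alternating_vec 6"
    by (auto simp: fun_eq_iff alternating_vec_apply evec_def)
  finally show ?thesis .
qed

lemma sigma_perm_alternating_vec_10_mem:
  assumes X: "omega_closed d (sigma_perm d) X" and e: "\<And>a. a \<in> {1..d} \<Longrightarrow> evec a \<in> X"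
    and d: "10 \<le> d" and alt: "alternating_vec 6 \<in> X"
  shows "alternating_vec 10 \<in> X"
proof -
  note form_simps = form_bilinear form_evec_evec form_alternating_vec_evec Omega_sigma_perm
    atLeastAtMost_nat_numeral
  have e3_plus_e8: "evec 3 + evec 8 \<in> X"
    by (rule evec_add_diff_mem(1)[OF X e]) (use d in \<open>simp_all add: Omega_sigma_perm\<close>)
  have e5_plus_e9: "evec 5 + evec 9 \<in> X"
    by (rule evec_add_diff_mem(1)[OF X e]) (use d in \<open>simp_all add: Omega_sigma_perm\<close>)
  have e10_minus_e3: "evec 10 - evec 3 \<in> X"
    by (rule evec_add_diff_mem(2)[OF X e]) (use d in \<open>simp_all add: Omega_sigma_perm\<close>)
  have "alternating_vec 6 + evec 5 \<in> X"
    by (rule omega_closed_add_mem[OF X alt e]) (use d in \<open>simp_all add: form_simps\<close>)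
  then have "alternating_vec 6 + evec 5 + (evec 3 + evec 8) \<in> X"
    by (rule omega_closed_add_mem[OF X _ e3_plus_e8]) (use d in \<open>simp_all add: form_simps\<close>)
  then have "alternating_vec 6 + evec 5 + (evec 3 + evec 8) - (evec 5 + evec 9) \<in> X"
    by (rule omega_closed_diff_mem[OF X _ e5_plus_e9]) (use d in \<open>simp_all add: form_simps\<close>)
  then have "alternating_vec 6 + evec 5 + (evec 3 + evec 8) - (evec 5 + evec 9) + (evec 10 - evec 3) \<in> X"
    by (rule omega_closed_add_mem[OF X _ e10_minus_e3]) (use d in \<open>simp_all add: form_simps\<close>)
  then have "alternating_vec 6 + evec 5 + (evec 3 + evec 8) - (evec 5 + evec 9) + (evec 10 - evec 3)
      - evec 7 \<in> X"
    by (rule omega_closed_diff_mem[OF X _ e]) (use d in \<open>simp_all add: form_simps\<close>)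
  also have "alternating_vec 6 + evec 5 + (evec 3 + evec 8) - (evec 5 + evec 9) + (evec 10 - evec 3)
      - evec 7 = alternating_vec 10"
    by (auto simp: fun_eq_iff alternating_vec_apply evec_def)
  finally show ?thesis .
qed

lemma sigma_perm_alternating_vec_mem:
  assumes X: "omega_closed d (sigma_perm d) X" "\<And>a. a \<in> {1..d} \<Longrightarrow> evec a \<in> X"
    and d: "8 \<le> d" and \<beta>: "\<beta> \<le> d" "\<beta> mod 4 = 2"
  shows "alternating_vec \<beta> \<in> X"
proof -
  have alt2: "alternating_vec 2 \<in> X"
    by (rule alternating_vec_2_mem[OF X]) (use d in \<open>simp_all add: Omega_sigma_perm\<close>)
  have alt6: "alternating_vec 6 \<in> X"
    using sigma_perm_alternating_vec_6_mem[OF X d alt2] .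
  have "\<exists>m. \<beta> = 4 * m + 2" using \<beta>(2) by presburger
  then obtain m where m: "\<beta> = 4 * m + 2" ..
  consider "m = 0" | "m = 1" | j where "m = j + 2"
    by (metis add_2_eq_Suc' not0_implies_Suc One_nat_def)
  then show ?thesis
  proof cases
    case 1
    then have "\<beta> = 2" using m by simp
    with alt2 show ?thesis by simp
  next
    case 2
    then have "\<beta> = 6" using m by simp
    with alt6 show ?thesis by simp
  next
    case (3 j)
    have "alternating_vec (10 + 4 * j) \<in> X"
    proof (rule tail_perm_alternating_vec_mem[OF sigma_block, folded sigma_perm_eq_tail_perm,
          OF _ _ _ _ _ _ X])
      show "alternating_vec 10 \<in> X"
        using sigma_perm_alternating_vec_10_mem[OF X _ alt6] m 3 \<beta>(1) by simp
      show "10 + 4 * j \<le> d" using m 3 \<beta>(1) by simp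
      show "(\<Sum>a\<in>{1..7}. (-1) ^ a * Omega (sigma_perm d) a c) = 0" if "c \<in> {2,3,5}" for c
        using d that by (auto simp: Omega_sigma_perm atLeastAtMost_nat_numeral)
    qed (use d in \<open>simp_all add: Omega_sigma_perm\<close>)
    then show ?thesis using m 3 by simp
  qed
qed

theorem lemma4p2:
  fixes d \<beta> :: nat and p :: perm_rows
  assumes "(p = tau_perm d \<and> 6 \<le> d) \<or> (p = sigma_perm d \<and> 8 \<le> d)"
    and "\<beta> \<le> d" and "\<beta> mod 4 = 2"
  shows "(\<lambda>i. \<Sum>a\<in>{1..\<beta>}. (-1) ^ a * evec a i) \<in> omega_closure d p (evec ` {1..d})"
proof -
  have "alternating_vec \<beta> \<in> X" if "evec ` {1..d} \<subseteq> X" "omega_closed d p X" for X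
    using assms that tau_perm_alternating_vec_mem[of d X \<beta>] sigma_perm_alternating_vec_mem[of d X \<beta>]
    by blast
  then show ?thesis unfolding omega_closure_def alternating_vec_def by blast
qed

end
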